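(* Let $f\in H^2(\mathbb{D})$. Then $|\langle f,e_{n,a}\rangle|\to 0$ as $n\to\infty$, uniformly in $a\in\mathbb{D}$; that is, for every $\varepsilon>0$ there is $N$ such that $|\langle f,e_{n,a}\rangle|<\varepsilon$ for all $n>N$ and all $a\in\mathbb{D}$.
   Context: $\mathbb{D}$ is the open unit disc; $H^2(\mathbb{D})$ the Hardy space with inner product $\langle f,g\rangle=\frac{1}{2\pi}\int_0^{2\pi}f(e^{it})\overline{g(e^{it})}\,dt$. For $n\in\mathbb{N}$ and $a\in\mathbb{D}$, $k_{n,a}(z)=\left(\frac{\partial}{\partial\overline{a}}\right)^n\frac{1}{1-\overline{a}z}=\frac{n!\,z^n}{(1-\overline{a}z)^{n+1}}$ and $e_{n,a}=k_{n,a}/\|k_{n,a}\|$. *)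

theory Defs
  imports "HOL-Analysis.Analysis"
begin

definition in_H2 :: "(complex \<Rightarrow> complex) \<Rightarrow> bool" where
  "in_H2 f \<longleftrightarrow> f holomorphic_on ball 0 1 \<and>
     (\<exists>B. \<forall>r\<in>{0<..<1}.
        integral {0..2*pi} (\<lambda>t. (cmod (f (of_real r * cis t)))\<^sup>2) / (2*pi) \<le> B)"

text \<open>The H^2 inner product: the boundary integral, realised as the limit of the
integrals over circles of radius r as r tends to 1 from below.\<close>
definition h2_inner :: "(complex \<Rightarrow> complex) \<Rightarrow> (complex \<Rightarrow> complex) \<Rightarrow> complex" where
  "h2_inner f g = Lim (at_left 1)
     (\<lambda>r::real. integral {0..2*pi} (\<lambda>t. f (of_real r * cis t) * cnj (g (of_real r * cis t)))
                 / of_real (2*pi))"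

definition h2_norm :: "(complex \<Rightarrow> complex) \<Rightarrow> real" where
  "h2_norm f = sqrt (Re (h2_inner f f))"

definition kern :: "nat \<Rightarrow> complex \<Rightarrow> complex \<Rightarrow> complex" where
  "kern n a z = of_nat (fact n) * z ^ n / (1 - cnj a * z) ^ (n + 1)"

definition ekern :: "nat \<Rightarrow> complex \<Rightarrow> complex \<Rightarrow> complex" where
  "ekern n a z = kern n a z / of_real (h2_norm (kern n a))"

end

theory Submission
  imports Defs "HOL-Complex_Analysis.Complex_Analysis"
begin

(* Write f = sum c_m z^m.  On a circle of radius r < 1 the monomials are orthogonal, so the
   circle mean of g * cnj h is sum c_m cnj(d_m) r^(2m); letting r tend to 1 gives
   <g, h> = sum c_m cnj(d_m) whenever both coefficient sequences are square summable, and
   sum |c_m|^2 < infinity for f in H^2.  The Taylor coefficients of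
   k_{n,a} = n! z^n / (1 - cnj(a) z)^(n+1) vanish below degree n, so by Cauchy-Schwarz
   |<f, e_{n,a}>| <= (sum_{m >= n} |c_m|^2)^(1/2), the tail of a convergent series,
   independent of a. *)

lemma has_integral_cis_int_multiple:
  fixes m :: int
  assumes "m \<noteq> 0"
  shows "((\<lambda>t. cis (of_int m * t)) has_integral 0) {0..2*pi}"
proof -
  define a where "a = \<i> * of_int m"
  have "a \<noteq> 0" using assms by (simp add: a_def)
  then have "((\<lambda>t. exp (a * t) / a) has_vector_derivative exp (a * t)) (at t within {0..2*pi})" for t
    by (intro derivative_eq_intros has_complex_derivative_imp_has_vector_derivative [unfolded o_def] | simp)+
  then have "((\<lambda>t. exp (a * of_real t)) has_integral
      exp (a * of_real (2*pi)) / a - exp (a * of_real 0) / a) {0..2*pi}"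
    by (intro fundamental_theorem_of_calculus) auto
  moreover have "exp (a * of_real (2*pi)) = 1"
    unfolding a_def using cis_multiple_2pi[of "of_int m"] by (simp add: cis_conv_exp mult_ac)
  moreover have "exp (a * of_real t) = cis (of_int m * t)" for t
    by (simp add: a_def cis_conv_exp mult_ac)
  ultimately show ?thesis by simp
qed

lemma has_integral_cis_power_cnj:
  fixes j k :: nat
  shows "((\<lambda>t. cis t ^ j * cnj (cis t) ^ k) has_integral (if j = k then 2*pi else 0)) {0..2*pi}"
proof -
  have cis_diff: "cis t ^ j * cnj (cis t) ^ k = cis (of_int (int j - int k) * t)" for t
    by (simp only: Complex.DeMoivre cis_cnj cis_mult) (simp add: algebra_simps)
  show ?thesis
  proof (cases "j = k")
    case True
    then show ?thesis
      unfolding cis_diff using has_integral_const_real[of "1::complex" 0 "2*pi"]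
      by (simp add: scaleR_conv_of_real)
  next
    case False
    then show ?thesis
      unfolding cis_diff using has_integral_cis_int_multiple[of "int j - int k"] by simp
  qed
qed

lemma has_integral_suminf_uniform:
  fixes F :: "nat \<Rightarrow> real \<Rightarrow> 'a::banach"
  assumes bound: "\<And>j t. t \<in> {a..b} \<Longrightarrow> norm (F j t) \<le> M j" and "summable M"
    and cont: "\<And>j. continuous_on {a..b} (F j)"
    and int: "\<And>j. (F j has_integral I j) {a..b}"
  shows "I sums integral {a..b} (\<lambda>t. \<Sum>j. F j t)"
    and "((\<lambda>t. \<Sum>j. F j t) has_integral (\<Sum>j. I j)) {a..b}"
proof -
  have lim: "uniform_limit {a..b} (\<lambda>n t. \<Sum>j<n. F j t) (\<lambda>t. \<Sum>j. F j t) sequentially"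
    using bound \<open>summable M\<close> by (intro Weierstrass_m_test) auto
  have partial_cont: "continuous_on {a..b} (\<lambda>t. \<Sum>j<n. F j t)" for n
    by (intro continuous_on_sum cont)
  obtain In J where In: "\<And>n. ((\<lambda>t. \<Sum>j<n. F j t) has_integral In n) {a..b}"
    and J: "((\<lambda>t. \<Sum>j. F j t) has_integral J) {a..b}" and "In \<longlonglongrightarrow> J"
    using uniform_limit_integral[OF lim partial_cont] by auto
  moreover have "In = (\<lambda>n. \<Sum>j<n. I j)"
    by (intro ext has_integral_unique[OF In has_integral_sum[OF finite_lessThan int]])
  ultimately have "I sums J"
    unfolding sums_def by simp
  with J show "I sums integral {a..b} (\<lambda>t. \<Sum>j. F j t)"
    and "((\<lambda>t. \<Sum>j. F j t) has_integral (\<Sum>j. I j)) {a..b}"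
    by (auto simp: integral_unique sums_unique[symmetric])
qed

lemma power_series_summable_norm:
  fixes c :: "nat \<Rightarrow> complex"
  assumes "\<And>z. z \<in> ball 0 R \<Longrightarrow> (\<lambda>k. c k * z^k) sums g z" and "0 \<le> r" "r < R"
  shows "summable (\<lambda>k. norm (c k) * r^k)"
proof -
  define s where "s = (r + R) / 2"
  have "r < s" "s < R"
    using assms(3) by (simp_all add: s_def)
  then have "of_real s \<in> ball (0::complex) R" and "norm (of_real r :: complex) < norm (of_real s :: complex)"
    using assms(2) by simp_all
  then have "summable (\<lambda>k. norm (c k * (of_real r :: complex) ^ k))"
    using assms(1) sums_summable powser_insidea by blast
  then show ?thesis
    using assms(2) by (simp add: norm_mult norm_power)
qed

lemma continuous_on_power_series_circle:
  fixes c :: "nat \<Rightarrow> complex"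
  assumes "\<And>z. z \<in> ball 0 1 \<Longrightarrow> (\<lambda>k. c k * z^k) sums g z" and "0 \<le> r" "r < 1"
  shows "continuous_on A (\<lambda>t. g (of_real r * cis t))"
proof -
  define s where "s = (r + 1) / 2"
  have "r < s" "s < 1"
    using assms(3) by (simp_all add: s_def)
  then have "of_real s \<in> ball (0::complex) 1"
    using assms(2) by simp
  then have summable_s: "summable (\<lambda>k. c k * of_real s ^ k)"
    using assms(1) sums_summable by blast
  have "ereal r < ereal s"
    using \<open>r < s\<close> by simp
  also have "\<dots> \<le> conv_radius c"
    using conv_radius_geI[OF summable_s] \<open>r < s\<close> assms(2) by simp
  finally have "r < conv_radius c" .
  moreover have "z \<in> cball 0 r \<Longrightarrow> (\<lambda>k. c k * (z - 0)^k) sums g z" for z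
    using assms by simp
  ultimately have "continuous_on (cball 0 r) g"
    by (rule powser_continuous_sums)
  moreover have "continuous_on A (\<lambda>t. of_real r * cis t)"
    by (intro continuous_intros)
  moreover have "(\<lambda>t. of_real r * cis t) ` A \<subseteq> cball 0 r"
    using assms(2) by (auto simp: norm_mult)
  ultimately show ?thesis
    by (rule continuous_on_compose2)
qed

lemma has_integral_power_series_circle_moment:
  fixes c :: "nat \<Rightarrow> complex"
  assumes g: "\<And>z. z \<in> ball 0 1 \<Longrightarrow> (\<lambda>j. c j * z^j) sums g z" and r: "0 \<le> r" "r < 1"
  shows "((\<lambda>t. g (of_real r * cis t) * cnj (of_real r * cis t) ^ k)
           has_integral c k * of_real (2*pi * r^(2*k))) {0..2*pi}"
proof -
  define z where "z t = of_real r * cis t" for t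
  define F where "F j t = c j * z t ^ j * cnj (z t) ^ k" for j t
  define I where "I j = c j * of_real (r^(j+k)) * of_real (if j = k then 2*pi else 0)" for j
  have "norm (F j t) \<le> norm (c j) * r^j * r^k" for j t
    using r by (simp add: F_def z_def norm_mult norm_power)
  moreover have "summable (\<lambda>j. norm (c j) * r^j * r^k)"
    using power_series_summable_norm[OF g r] by (rule summable_mult2)
  moreover have "continuous_on {0..2*pi} (F j)" for j
    unfolding F_def z_def by (intro continuous_intros)
  moreover have "(F j has_integral I j) {0..2*pi}" for j
  proof -
    have "F j t = c j * of_real (r^(j+k)) * (cis t ^ j * cnj (cis t) ^ k)" for t
      unfolding F_def z_def
      by (simp only: complex_cnj_mult complex_cnj_complex_of_real power_mult_distrib power_add
          of_real_mult of_real_power) (simp only: mult_ac)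
    then show ?thesis
      unfolding I_def using has_integral_mult_right[OF has_integral_cis_power_cnj] by presburger
  qed
  ultimately have "((\<lambda>t. \<Sum>j. F j t) has_integral (\<Sum>j. I j)) {0..2*pi}"
    by (rule has_integral_suminf_uniform(2))
  moreover have "(\<Sum>j. F j t) = g (z t) * cnj (z t) ^ k" for t
  proof -
    have "z t \<in> ball 0 1"
      using r by (simp add: z_def norm_mult)
    then show ?thesis
      unfolding F_def using sums_unique sums_mult2[OF g] by metis
  qed
  moreover have "(\<Sum>j. I j) = I k"
    using sums_single[of k I] by (simp add: I_def sums_iff if_distrib cong: if_cong)
  moreover have "I k = c k * of_real (2*pi * r^(2*k))"
    unfolding I_def mult_2[of k] by (simp add: mult_ac)
  ultimately show ?thesis
    by (simp add: z_def)
qed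

lemma circle_mean_power_series_product:
  fixes c d :: "nat \<Rightarrow> complex"
  assumes g: "\<And>z. z \<in> ball 0 1 \<Longrightarrow> (\<lambda>k. c k * z^k) sums g z"
    and h: "\<And>z. z \<in> ball 0 1 \<Longrightarrow> (\<lambda>k. d k * z^k) sums h z"
    and r: "0 \<le> r" "r < 1"
  shows "(\<lambda>m. c m * cnj (d m) * of_real (r^(2*m))) sums
     (integral {0..2*pi} (\<lambda>t. g (of_real r * cis t) * cnj (h (of_real r * cis t))) / of_real (2*pi))"
proof -
  define z where "z t = of_real r * cis t" for t
  define F where "F k t = g (z t) * cnj (z t) ^ k * cnj (d k)" for k t
  have g_cont: "continuous_on {0..2*pi} (\<lambda>t. g (z t))"
    unfolding z_def by (rule continuous_on_power_series_circle[OF g r])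
  then obtain B where B: "\<And>t. t \<in> {0..2*pi} \<Longrightarrow> norm (g (z t)) \<le> B"
    using compact_continuous_image[OF g_cont compact_Icc] compact_imp_bounded bounded_iff
    by (metis image_eqI)
  have "norm (F k t) \<le> B * (norm (d k) * r^k)" if "t \<in> {0..2*pi}" for k t
  proof -
    have "norm (F k t) = norm (g (z t)) * (norm (d k) * r^k)"
      using r by (simp add: F_def z_def norm_mult norm_power)
    also have "\<dots> \<le> B * (norm (d k) * r^k)"
      using B[OF that] r by (intro mult_right_mono) auto
    finally show ?thesis .
  qed
  moreover have "summable (\<lambda>k. B * (norm (d k) * r^k))"
    using power_series_summable_norm[OF h r] by (rule summable_mult)
  moreover have "continuous_on {0..2*pi} (F k)" for k
    unfolding F_def using g_cont unfolding z_def by (intro continuous_intros)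
  moreover have "(F k has_integral c k * of_real (2*pi * r^(2*k)) * cnj (d k)) {0..2*pi}" for k
    unfolding F_def z_def by (intro has_integral_mult_left has_integral_power_series_circle_moment[OF g r])
  ultimately have "(\<lambda>k. c k * of_real (2*pi * r^(2*k)) * cnj (d k)) sums integral {0..2*pi} (\<lambda>t. \<Sum>k. F k t)"
    by (rule has_integral_suminf_uniform(1))
  moreover have "(\<Sum>k. F k t) = g (z t) * cnj (h (z t))" for t
  proof -
    have "z t \<in> ball 0 1"
      using r by (simp add: z_def norm_mult)
    then have "(\<lambda>k. cnj (d k * z t ^ k)) sums cnj (h (z t))"
      unfolding sums_cnj by (rule h)
    then have "(\<lambda>k. g (z t) * cnj (d k * z t ^ k)) sums (g (z t) * cnj (h (z t)))"
      by (rule sums_mult)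
    then show ?thesis
      by (simp add: F_def sums_iff mult_ac)
  qed
  ultimately have "(\<lambda>k. c k * of_real (2*pi * r^(2*k)) * cnj (d k) / of_real (2*pi)) sums
      (integral {0..2*pi} (\<lambda>t. g (z t) * cnj (h (z t))) / of_real (2*pi))"
    by (intro sums_divide) simp
  moreover have "c k * of_real (2*pi * r^(2*k)) * cnj (d k) / of_real (2*pi) = c k * cnj (d k) * of_real (r^(2*k))" for k
    by (simp add: field_simps)
  ultimately show ?thesis
    by (simp add: z_def mult_ac)
qed

lemma series_Cauchy_Schwarz:
  fixes x y :: "nat \<Rightarrow> complex"
  assumes sx: "summable (\<lambda>m. norm (x m)^2)" and sy: "summable (\<lambda>m. norm (y m)^2)"
  shows "summable (\<lambda>m. norm (x m * cnj (y m)))"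
    and "norm (\<Sum>m. x m * cnj (y m)) \<le> sqrt (\<Sum>m. norm (x m)^2) * sqrt (\<Sum>m. norm (y m)^2)"
proof -
  have partial: "(\<Sum>m<n. norm (x m * cnj (y m))) \<le> sqrt (\<Sum>m. norm (x m)^2) * sqrt (\<Sum>m. norm (y m)^2)" for n
  proof -
    have "(\<Sum>m<n. norm (x m * cnj (y m))) \<le> L2_set (\<lambda>m. norm (x m)) {..<n} * L2_set (\<lambda>m. norm (y m)) {..<n}"
      using L2_set_mult_ineq[of "\<lambda>m. norm (x m)" "\<lambda>m. norm (y m)" "{..<n}"] by (simp add: norm_mult)
    also have "\<dots> \<le> sqrt (\<Sum>m. norm (x m)^2) * sqrt (\<Sum>m. norm (y m)^2)"
    proof -
      have "sqrt (\<Sum>m<n. norm (x m)^2) \<le> sqrt (\<Sum>m. norm (x m)^2)"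
        and "sqrt (\<Sum>m<n. norm (y m)^2) \<le> sqrt (\<Sum>m. norm (y m)^2)"
        using sx sy by (intro real_sqrt_le_mono sum_le_suminf; simp)+
      then show ?thesis
        unfolding L2_set_def using sx sy by (intro mult_mono) (simp_all add: suminf_nonneg sum_nonneg)
    qed
    finally show ?thesis .
  qed
  then show summable: "summable (\<lambda>m. norm (x m * cnj (y m)))"
    by (intro summableI_nonneg_bounded) auto
  have "norm (\<Sum>m. x m * cnj (y m)) \<le> (\<Sum>m. norm (x m * cnj (y m)))"
    by (rule summable_norm[OF summable])
  also have "\<dots> \<le> sqrt (\<Sum>m. norm (x m)^2) * sqrt (\<Sum>m. norm (y m)^2)"
    by (rule suminf_le_const[OF summable partial])
  finally show "norm (\<Sum>m. x m * cnj (y m)) \<le> sqrt (\<Sum>m. norm (x m)^2) * sqrt (\<Sum>m. norm (y m)^2)" .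
qed

lemma h2_inner_power_series:
  fixes c d :: "nat \<Rightarrow> complex"
  assumes g: "\<And>z. z \<in> ball 0 1 \<Longrightarrow> (\<lambda>k. c k * z^k) sums g z"
    and h: "\<And>z. z \<in> ball 0 1 \<Longrightarrow> (\<lambda>k. d k * z^k) sums h z"
    and sc: "summable (\<lambda>k. norm (c k)^2)" and sd: "summable (\<lambda>k. norm (d k)^2)"
  shows "h2_inner g h = (\<Sum>m. c m * cnj (d m))"
proof -
  \<comment> \<open>Abel's theorem, made easy by the absolute convergence of \<open>\<Sum> c\<^sub>m cnj d\<^sub>m\<close>.\<close>
  define S where "S r = (\<Sum>m. c m * cnj (d m) * of_real (r^(2*m)))" for r :: real
  define Q where "Q r = integral {0..2*pi} (\<lambda>t. g (of_real r * cis t) * cnj (h (of_real r * cis t)))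
                          / of_real (2*pi)" for r :: real
  have "uniform_limit {0..1} (\<lambda>n r. \<Sum>m<n. c m * cnj (d m) * of_real (r^(2*m))) S sequentially"
    unfolding S_def
  proof (rule Weierstrass_m_test[OF _ series_Cauchy_Schwarz(1)[OF sc sd]])
    fix m and r :: real
    assume "r \<in> {0..1}"
    then have "\<bar>r^(2*m)\<bar> \<le> 1"
      by (simp add: power_le_one)
    then show "norm (c m * cnj (d m) * of_real (r^(2*m))) \<le> norm (c m * cnj (d m))"
      unfolding norm_mult norm_of_real by (rule mult_left_le) simp
  qed
  then have "continuous_on {0..1} S"
    by (rule uniform_limit_theorem[rotated]) (simp, intro always_eventually allI continuous_intros)
  then have "(S \<longlongrightarrow> S 1) (at_left 1)"
    by (rule continuous_on_Icc_at_leftD) simp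
  moreover have "eventually (\<lambda>r. S r = Q r) (at_left (1::real))"
    using eventually_at_left_real[OF zero_less_one]
  proof (rule eventually_mono)
    fix r :: real
    assume "r \<in> {0<..<1}"
    then show "S r = Q r"
      unfolding S_def Q_def using circle_mean_power_series_product[OF g h, of r] by (simp add: sums_iff)
  qed
  ultimately have "(Q \<longlongrightarrow> S 1) (at_left 1)"
    by (rule Lim_transform_eventually)
  then have "h2_inner g h = S 1"
    unfolding h2_inner_def Q_def[symmetric] by (intro tendsto_Lim) simp_all
  then show ?thesis
    by (simp add: S_def)
qed

lemma circle_mean_norm_power2_power_series:
  fixes c :: "nat \<Rightarrow> complex"
  assumes g: "\<And>z. z \<in> ball 0 1 \<Longrightarrow> (\<lambda>k. c k * z^k) sums g z" and r: "0 \<le> r" "r < 1"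
  shows "(\<lambda>m. norm (c m)^2 * r^(2*m)) sums
     (integral {0..2*pi} (\<lambda>t. (norm (g (of_real r * cis t)))^2) / (2*pi))"
proof -
  define I where "I = integral {0..2*pi} (\<lambda>t. (norm (g (of_real r * cis t)))^2)"
  have "(\<lambda>t. (norm (g (of_real r * cis t)))^2) integrable_on {0..2*pi}"
    by (intro integrable_continuous_real continuous_intros continuous_on_power_series_circle[OF g r])
  then have "((\<lambda>t. of_real ((norm (g (of_real r * cis t)))^2) :: complex) has_integral of_real I) {0..2*pi}"
    unfolding I_def by (intro has_integral_of_real integrable_integral)
  then have "integral {0..2*pi} (\<lambda>t. g (of_real r * cis t) * cnj (g (of_real r * cis t))) = of_real I"
    by (simp only: complex_norm_square integral_unique)
  then have "(\<lambda>m. c m * cnj (c m) * of_real (r^(2*m))) sums (of_real I / of_real (2*pi))"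
    using circle_mean_power_series_product[OF g g r] by simp
  then have "(\<lambda>m. of_real (norm (c m)^2 * r^(2*m))) sums (of_real (I / (2*pi)) :: complex)"
    by (simp only: of_real_mult of_real_divide complex_norm_square)
  then show ?thesis
    unfolding I_def by (simp only: sums_of_real_iff)
qed

lemma in_H2_power_series:
  assumes "in_H2 f"
  obtains c where "\<And>z. z \<in> ball 0 1 \<Longrightarrow> (\<lambda>k. c k * z^k) sums f z"
    and "summable (\<lambda>k. norm (c k)^2)"
proof -
  obtain B where holo: "f holomorphic_on ball 0 1"
    and B: "\<And>r. r \<in> {0<..<1} \<Longrightarrow>
              integral {0..2*pi} (\<lambda>t. (cmod (f (of_real r * cis t)))\<^sup>2) / (2*pi) \<le> B"
    using assms unfolding in_H2_def by blast
  define c where "c k = (deriv ^^ k) f 0 / fact k" for k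
  have f: "(\<lambda>k. c k * z^k) sums f z" if "z \<in> ball 0 1" for z
    using holomorphic_power_series[OF holo that] by (simp add: c_def)
  have partial_bound: "(\<Sum>m<N. norm (c m)^2 * r^(2*m)) \<le> B" if "r \<in> {0<..<1}" for r N
  proof -
    define M where "M = integral {0..2*pi} (\<lambda>t. (cmod (f (of_real r * cis t)))\<^sup>2) / (2*pi)"
    have S: "(\<lambda>m. norm (c m)^2 * r^(2*m)) sums M"
      unfolding M_def using circle_mean_norm_power2_power_series[OF f] that by simp
    have "(\<Sum>m<N. norm (c m)^2 * r^(2*m)) \<le> (\<Sum>m. norm (c m)^2 * r^(2*m))"
      using S that by (intro sum_le_suminf) (auto simp: sums_iff)
    also have "\<dots> = M"
      using S by (simp add: sums_iff)
    also have "\<dots> \<le> B"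
      unfolding M_def using B[OF that] .
    finally show ?thesis .
  qed
  have "(\<Sum>m<N. norm (c m)^2) \<le> B" for N
  proof -
    have "((\<lambda>r. \<Sum>m<N. norm (c m)^2 * r^(2*m)) \<longlongrightarrow> (\<Sum>m<N. norm (c m)^2 * 1^(2*m))) (at_left (1::real))"
      by (intro tendsto_intros)
    moreover have "eventually (\<lambda>r. (\<Sum>m<N. norm (c m)^2 * r^(2*m)) \<le> B) (at_left (1::real))"
      using eventually_at_left_real[OF zero_less_one] by eventually_elim (rule partial_bound)
    ultimately have "(\<Sum>m<N. norm (c m)^2 * 1^(2*m)) \<le> B"
      by (rule tendsto_upperbound) simp
    then show ?thesis
      by simp
  qed
  then have "summable (\<lambda>k. norm (c k)^2)"
    by (intro summableI_nonneg_bounded) auto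
  with f that show ?thesis
    by blast
qed

lemma summable_norm_power2:
  fixes d :: "nat \<Rightarrow> 'a::real_normed_vector"
  assumes "summable (\<lambda>m. norm (d m))"
  shows "summable (\<lambda>m. norm (d m)^2)"
proof -
  have "eventually (\<lambda>m. norm (d m) < 1) sequentially"
    using summable_LIMSEQ_zero[OF assms] by (rule order_tendstoD) simp
  then have "eventually (\<lambda>m. norm (norm (d m)^2) \<le> norm (d m)) sequentially"
    by eventually_elim (simp add: power2_eq_square mult_left_le_one_le)
  then show ?thesis
    using assms by (rule summable_comparison_test_ev)
qed

lemma kern_power_series:
  assumes a: "a \<in> ball 0 1"
  obtains d where "\<And>z. z \<in> ball 0 1 \<Longrightarrow> (\<lambda>m. d m * z^m) sums kern n a z"
    and "summable (\<lambda>m. norm (d m)^2)"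
    and "\<And>m. m < n \<Longrightarrow> d m = 0"
proof -
  \<comment> \<open>\<open>kern n a\<close> is holomorphic on a disc of radius \<open>R > 1\<close>, so its Taylor series converges absolutely at \<open>z = 1\<close>.\<close>
  define R where "R = 2 / (1 + norm a)"
  have "0 < 1 + norm a"
    by (simp add: add_pos_nonneg)
  then have "1 < R" "norm a * R < 1"
    using a by (simp_all add: R_def field_simps)
  define q where "q z = of_nat (fact n) / (1 - cnj a * z)^(n+1)" for z
  have "1 - cnj a * z \<noteq> 0" if "z \<in> ball 0 R" for z
  proof
    assume "1 - cnj a * z = 0"
    then have "norm a * norm z = 1"
      by (metis complex_mod_cnj norm_mult norm_one right_minus_eq)
    moreover have "norm a * norm z \<le> norm a * R"
      using that by (intro mult_left_mono) auto
    ultimately show False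
      using \<open>norm a * R < 1\<close> by simp
  qed
  then have "q holomorphic_on ball 0 R"
    unfolding q_def by (intro holomorphic_intros) auto
  define b where "b j = (deriv ^^ j) q 0 / fact j" for j
  have b: "(\<lambda>j. b j * z^j) sums q z" if "z \<in> ball 0 R" for z
    using holomorphic_power_series[OF \<open>q holomorphic_on ball 0 R\<close> that] by (simp add: b_def)
  define d where "d m = (if m < n then 0 else b (m - n))" for m
  have d: "(\<lambda>m. d m * z^m) sums kern n a z" if "z \<in> ball 0 R" for z
  proof -
    have "(\<lambda>j. d (j + n) * z^(j + n)) sums kern n a z"
      using sums_mult[OF b[OF that], of "z^n"] by (simp add: d_def q_def kern_def power_add mult_ac)
    then show ?thesis
      by (subst (asm) sums_iff_shift) (simp add: d_def)
  qed
  show ?thesis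
  proof (rule that)
    show "(\<lambda>m. d m * z^m) sums kern n a z" if "z \<in> ball 0 1" for z
      using that \<open>1 < R\<close> by (intro d) simp
    have "summable (\<lambda>m. norm (d m) * 1^m)"
      using power_series_summable_norm[where R=R and r=1, OF d] \<open>1 < R\<close> by simp
    then show "summable (\<lambda>m. norm (d m)^2)"
      by (intro summable_norm_power2) simp
    show "d m = 0" if "m < n" for m
      using that by (simp add: d_def)
  qed
qed

lemma ekern_power_series:
  assumes a: "a \<in> ball 0 1"
  obtains D where "\<And>z. z \<in> ball 0 1 \<Longrightarrow> (\<lambda>m. D m * z^m) sums ekern n a z"
    and "summable (\<lambda>m. norm (D m)^2)" and "(\<Sum>m. norm (D m)^2) \<le> 1"
    and "\<And>m. m < n \<Longrightarrow> D m = 0"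
proof -
  obtain d where d: "\<And>z. z \<in> ball 0 1 \<Longrightarrow> (\<lambda>m. d m * z^m) sums kern n a z"
    and sd: "summable (\<lambda>m. norm (d m)^2)" and d_low: "\<And>m. m < n \<Longrightarrow> d m = 0"
    using kern_power_series[OF a] by blast
  define S where "S = (\<Sum>m. norm (d m)^2)"
  have "h2_inner (kern n a) (kern n a) = (\<Sum>m. d m * cnj (d m))"
    by (rule h2_inner_power_series[OF d d sd sd])
  also have "\<dots> = of_real S"
    by (simp only: complex_norm_square[symmetric] suminf_of_real[OF sd] S_def)
  finally have "h2_norm (kern n a) = sqrt S"
    by (simp add: h2_norm_def)
  define D where "D m = d m / of_real (sqrt S)" for m
  have norm_D: "norm (D m)^2 = norm (d m)^2 / S" for m
    by (simp add: D_def norm_divide power_divide S_def suminf_nonneg sd)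
  show ?thesis
  proof (rule that)
    show "(\<lambda>m. D m * z^m) sums ekern n a z" if "z \<in> ball 0 1" for z
      using sums_divide[OF d[OF that], of "of_real (sqrt S)"] \<open>h2_norm (kern n a) = sqrt S\<close>
      by (simp add: D_def ekern_def)
    show "summable (\<lambda>m. norm (D m)^2)"
      unfolding norm_D using sd by simp
    \<comment> \<open>No need to show \<open>S \<noteq> 0\<close>: for \<open>S = 0\<close> we get \<open>D = 0\<close> from \<open>x / 0 = 0\<close>.\<close>
    show "(\<Sum>m. norm (D m)^2) \<le> 1"
      unfolding norm_D using sd by (simp add: suminf_divide S_def)
    show "D m = 0" if "m < n" for m
      using that by (simp add: D_def d_low)
  qed
qed

lemma norm_h2_inner_ekern_le_tail:
  fixes c :: "nat \<Rightarrow> complex"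
  assumes f: "\<And>z. z \<in> ball 0 1 \<Longrightarrow> (\<lambda>k. c k * z^k) sums f z"
    and sc: "summable (\<lambda>k. norm (c k)^2)" and a: "a \<in> ball 0 1"
  shows "cmod (h2_inner f (ekern n a)) \<le> sqrt (\<Sum>i. norm (c (i + n))^2)"
proof -
  obtain D where D: "\<And>z. z \<in> ball 0 1 \<Longrightarrow> (\<lambda>m. D m * z^m) sums ekern n a z"
    and sD: "summable (\<lambda>m. norm (D m)^2)" and D_le_1: "(\<Sum>m. norm (D m)^2) \<le> 1"
    and D_low: "\<And>m. m < n \<Longrightarrow> D m = 0"
    using ekern_power_series[OF a] by blast
  define x where "x m = (if n \<le> m then c m else 0)" for m
  have sx: "summable (\<lambda>m. norm (x m)^2)"
    by (rule summable_comparison_test[OF _ sc]) (auto simp: x_def)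
  have x_tail: "(\<Sum>m. norm (x m)^2) = (\<Sum>i. norm (c (i + n))^2)"
    using suminf_split_initial_segment[OF sx, of n] by (simp add: x_def)
  have "h2_inner f (ekern n a) = (\<Sum>m. c m * cnj (D m))"
    by (rule h2_inner_power_series[OF f D sc sD])
  also have "\<dots> = (\<Sum>m. x m * cnj (D m))"
    by (rule arg_cong[where f=suminf]) (simp add: fun_eq_iff x_def D_low)
  finally have "cmod (h2_inner f (ekern n a)) \<le> sqrt (\<Sum>m. norm (x m)^2) * sqrt (\<Sum>m. norm (D m)^2)"
    using series_Cauchy_Schwarz(2)[OF sx sD] by simp
  also have "\<dots> \<le> sqrt (\<Sum>m. norm (x m)^2)"
    using D_le_1 sx by (intro mult_left_le) (simp_all add: suminf_nonneg)
  finally show ?thesis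
    unfolding x_tail .
qed

theorem lemma2:
  assumes "in_H2 f"
  shows "\<forall>\<epsilon>>0. \<exists>N::nat. \<forall>n>N. \<forall>a\<in>ball (0::complex) 1. cmod (h2_inner f (ekern n a)) < \<epsilon>"
proof (intro allI impI)
  fix \<epsilon> :: real
  assume "\<epsilon> > 0"
  obtain c where f: "\<And>z. z \<in> ball 0 1 \<Longrightarrow> (\<lambda>k. c k * z^k) sums f z"
    and sc: "summable (\<lambda>k. norm (c k)^2)"
    using in_H2_power_series[OF assms] by blast
  obtain N where tail: "\<And>n. n \<ge> N \<Longrightarrow> norm (\<Sum>i. norm (c (i + n))^2) < \<epsilon>^2"
    using suminf_exist_split[OF _ sc] \<open>\<epsilon> > 0\<close> by (meson zero_less_power)
  have "cmod (h2_inner f (ekern n a)) < \<epsilon>" if "N < n" "a \<in> ball 0 1" for n a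
  proof -
    have "cmod (h2_inner f (ekern n a)) \<le> sqrt (\<Sum>i. norm (c (i + n))^2)"
      by (rule norm_h2_inner_ekern_le_tail[OF f sc that(2)])
    also have "\<dots> < \<epsilon>"
      using tail[of n] that(1) \<open>\<epsilon> > 0\<close> by (simp add: real_less_lsqrt)
    finally show ?thesis .
  qed
  then show "\<exists>N::nat. \<forall>n>N. \<forall>a\<in>ball (0::complex) 1. cmod (h2_inner f (ekern n a)) < \<epsilon>"
    by blast
qed

end
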